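(* There exist an absolute constant $c>0$, a calibrated distribution $\mathcal D$ of $(p,y)\in[0,1]\times\{0,1\}$, and a decision task $Z=(A,U)$ with $U:A\times\{0,1\}\to[0,1]$ such that for every positive integer $T$ and every randomized response function $r:[0,1]\to\Delta(A)$, if $S$ is the uniform distribution on $T$ i.i.d. data points drawn from $\mathcal D$, then with probability at least $1/3$ over $S$, $\mathsf{SR}_Z(r,S)\ge c\,T^{-1/2}$.
   Context: A distribution of $(p,y)$ is calibrated if $\mathbb E[y\mid p]=p$. A decision task $Z=(A,U)$ consists of an action set $A$ and a utility function $U:A\times\{0,1\}\to[0,1]$. For a randomized response function $r:[0,1]\to\Delta(A)$ and a distribution $\mathcal D$ on $[0,1]\times\{0,1\}$, the swap regret is $\mathsf{SR}_Z(r,\mathcal D)=\sup_{\sigma:A\to A}\mathbb E_{(p,y)\sim\mathcal D,\,a\sim r(p)}[U(\sigma(a),y)-U(a,y)]$. *)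

theory Defs
  imports "HOL-Probability.Probability"
begin

definition calibrated :: "(real \<times> real) pmf \<Rightarrow> bool" where
  "calibrated D \<longleftrightarrow>
     set_pmf D \<subseteq> {0..1} \<times> {0,1} \<and>
     (\<forall>p \<in> fst ` set_pmf D.
        measure_pmf.expectation (cond_pmf D {z. fst z = p}) snd = p)"

definition decision_task :: "nat set \<Rightarrow> (nat \<Rightarrow> real \<Rightarrow> real) \<Rightarrow> bool" where
  "decision_task A U \<longleftrightarrow> A \<noteq> {} \<and> finite A \<and>
     (\<forall>a\<in>A. \<forall>y\<in>{0,1}. U a y \<in> {0..1})"

definition response_fn :: "nat set \<Rightarrow> (real \<Rightarrow> nat pmf) \<Rightarrow> bool" where
  "response_fn A r \<longleftrightarrow> (\<forall>p\<in>{0..1}. set_pmf (r p) \<subseteq> A)"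

definition swap_regret ::
  "nat set \<Rightarrow> (nat \<Rightarrow> real \<Rightarrow> real) \<Rightarrow> (real \<Rightarrow> nat pmf) \<Rightarrow> (real \<times> real) pmf \<Rightarrow> real" where
  "swap_regret A U r D =
     (SUP \<sigma>\<in>{\<sigma>. \<sigma> ` A \<subseteq> A}.
        measure_pmf.expectation D
          (\<lambda>(p, y). measure_pmf.expectation (r p) (\<lambda>a. U (\<sigma> a) y - U a y)))"

definition empirical :: "'a list \<Rightarrow> 'a pmf" where
  "empirical xs = map_pmf (\<lambda>i. xs ! i) (pmf_of_set {..<length xs})"

end

theory Submission
  imports Defs
begin

text \<open>
  The witness is the calibrated distribution that always predicts 1/2 while y is a fair coin,
  together with four actions whose utilities are affine in y, so that U a F is the expected
  utility of a against a coin of bias F; the best action changes at F = 19/40, 1/2 and 21/40.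
  The response r(1/2) puts mass at least 1/4 on some action a, and swapping every action to
  the best response against the empirical frequency F = k/T gains at least a quarter of the
  loss of a at F. With probability at least 1/3 over k ~ Bin(T, 1/2) this loss is at least
  (1/2500)/sqrt T: for the outer actions it is a constant as soon as F lies on the wrong side
  of 1/2, for the inner ones it is at least |F - 1/2| on one side, and F deviates from 1/2 by
  order 1/sqrt T with constant probability because no point mass of Bin(T, 1/2) exceeds
  1/sqrt(3 floor(T/2) + 1).
\<close>

section \<open>Anti-concentration of the fair binomial distribution\<close>

lemma Suc_times_binomial_odd_middle:
  "Suc m * (Suc (2 * m) choose m) = Suc (2 * m) * ((2 * m) choose m)"
  using binomial_absorb_comp[of "Suc (2 * m)" m] by (simp add: Suc_diff_le)

lemma central_binomial_Suc:
  "((2 * Suc m) choose Suc m) * Suc m = 2 * (2 * m + 1) * ((2 * m) choose m)"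
proof -
  have "Suc m * (((2 * Suc m) choose Suc m) * Suc m) = Suc m * (Suc (Suc (2 * m)) * (Suc (2 * m) choose m))"
    using Suc_times_binomial_eq[of "Suc (2 * m)" m] by simp
  also have "\<dots> = Suc (Suc (2 * m)) * (Suc m * (Suc (2 * m) choose m))"
    by (simp only: ac_simps)
  also have "\<dots> = Suc m * (2 * (2 * m + 1) * ((2 * m) choose m))"
    unfolding Suc_times_binomial_odd_middle by simp
  finally show ?thesis
    by (simp only: mult_cancel1) simp
qed

lemma central_binomial_sq_le: "real ((2 * m) choose m)^2 * (3 * real m + 1) \<le> 16 ^ m"
proof (induction m)
  case 0
  then show ?case by simp
next
  case (Suc m)
  define c where "c = real ((2 * m) choose m)"
  define c' where "c' = real ((2 * Suc m) choose Suc m)"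
  have rec: "c' * (real m + 1) = 2 * (2 * m + 1) * c"
    unfolding c_def c'_def using arg_cong[OF central_binomial_Suc[of m], of real]
    by (simp del: binomial_Suc_Suc add: algebra_simps)
  have "c'^2 * (3 * real (Suc m) + 1) * (real m + 1)^2 = (c' * (real m + 1))^2 * (3 * m + 4)"
    by (simp add: power_mult_distrib)
  also have "\<dots> = c^2 * (4 * (2 * m + 1)^2 * (3 * m + 4))"
    unfolding rec by (simp add: power2_eq_square algebra_simps)
  also have "\<dots> \<le> c^2 * (16 * (3 * m + 1) * (real m + 1)^2)"
    by (intro mult_left_mono) (simp_all add: power2_eq_square algebra_simps)
  also have "\<dots> \<le> 16 ^ Suc m * (real m + 1)^2"
    using mult_right_mono[OF Suc.IH, of "16 * (real m + 1)^2"] unfolding c_def by (simp add: algebra_simps)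
  finally show ?case
    unfolding c'_def by (rule mult_right_le_imp_le) simp
qed

lemma binomial_odd_middle_le: "(Suc (2 * m) choose m) \<le> 2 * ((2 * m) choose m)"
proof -
  have "Suc m * (Suc (2 * m) choose m) \<le> Suc m * (2 * ((2 * m) choose m))"
    unfolding Suc_times_binomial_odd_middle
    by simp
  then show ?thesis
    by (simp only: mult_le_cancel1)
qed

lemma binomial_middle_sq_le: "real (n choose (n div 2))^2 * (3 * real (n div 2) + 1) \<le> 4 ^ n"
proof (cases "even n")
  case True
  then obtain m where "n = 2 * m" by blast
  then show ?thesis
    using central_binomial_sq_le[of m] by (simp add: power_mult)
next
  case False
  then obtain m where n: "n = Suc (2 * m)" using oddE by fastforce
  have "real (n choose (n div 2))^2 \<le> 4 * real ((2 * m) choose m)^2"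
    using power_mono[of "real (n choose (n div 2))" "2 * real ((2 * m) choose m)" 2]
      binomial_odd_middle_le[of m]
    unfolding n by (simp add: power_mult_distrib flip: of_nat_mult)
  then have "real (n choose (n div 2))^2 * (3 * real (n div 2) + 1)
      \<le> 4 * (real ((2 * m) choose m)^2 * (3 * real m + 1))"
    unfolding n by (simp add: mult_right_mono)
  also have "\<dots> \<le> 4 ^ n"
    using central_binomial_sq_le[of m] unfolding n by (simp add: power_mult)
  finally show ?thesis .
qed

lemma pmf_binomial_half: "pmf (binomial_pmf n (1/2)) k = real (n choose k) / 2 ^ n"
  by (cases "k \<le> n") (simp_all add: power_one_over power_add [symmetric])

lemma pmf_binomial_half_le: "pmf (binomial_pmf n (1/2)) k \<le> 1 / sqrt (3 * real (n div 2) + 1)"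
proof -
  have "((2::real) ^ n)^2 = 4 ^ n"
    by (simp add: power2_eq_square flip: power_mult_distrib)
  then have "(real (n choose (n div 2)) / 2 ^ n)^2 \<le> 1 / (3 * real (n div 2) + 1)"
    using binomial_middle_sq_le[of n] by (simp add: field_simps)
  then have "real (n choose (n div 2)) / 2 ^ n \<le> 1 / sqrt (3 * real (n div 2) + 1)"
    by (metis real_le_rsqrt real_sqrt_divide real_sqrt_one)
  moreover have "real (n choose k) / 2 ^ n \<le> real (n choose (n div 2)) / 2 ^ n"
    by (simp add: binomial_maximum divide_right_mono)
  ultimately show ?thesis
    unfolding pmf_binomial_half by linarith
qed

lemma prob_binomial_half_eq_sum:
  "measure_pmf.prob (binomial_pmf n (1/2)) X = (\<Sum>k\<in>{..n} \<inter> X. pmf (binomial_pmf n (1/2)) k)"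
  using measure_Int_set_pmf[of "binomial_pmf n (1/2)" X]
  by (simp add: measure_measure_pmf_finite Int_commute)

lemma prob_binomial_half_le_card:
  "measure_pmf.prob (binomial_pmf n (1/2)) X \<le> card ({..n} \<inter> X) / sqrt (3 * real (n div 2) + 1)"
  unfolding prob_binomial_half_eq_sum
  using sum_bounded_above[of "{..n} \<inter> X" "pmf (binomial_pmf n (1/2))", OF pmf_binomial_half_le]
  by simp

lemma prob_binomial_half_mirror:
  assumes "\<And>k. k \<le> n \<Longrightarrow> k \<in> Y \<longleftrightarrow> n - k \<in> X"
  shows "measure_pmf.prob (binomial_pmf n (1/2)) Y = measure_pmf.prob (binomial_pmf n (1/2)) X"
  unfolding prob_binomial_half_eq_sum pmf_binomial_half
  by (rule sum.reindex_bij_witness[of _ "\<lambda>k. n - k" "\<lambda>k. n - k"])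
     (use assms in \<open>auto simp: binomial_symmetric[symmetric]\<close>)

lemma prob_binomial_half_cover:
  assumes "\<And>k. k \<le> n \<Longrightarrow> k \<in> X \<union> Y"
  shows "1 \<le> measure_pmf.prob (binomial_pmf n (1/2)) X + measure_pmf.prob (binomial_pmf n (1/2)) Y"
proof -
  have "measure_pmf.prob (binomial_pmf n (1/2)) (X \<union> Y) = 1"
    using assms by (subst measure_pmf.prob_eq_1) (auto simp: AE_measure_pmf_iff)
  then show ?thesis
    using measure_Un_le[of X "measure_pmf (binomial_pmf n (1/2))" Y] by simp
qed

lemma prob_binomial_half_ge_half:
  "1/2 \<le> measure_pmf.prob (binomial_pmf n (1/2)) {k. n \<le> 2 * k}"
  "1/2 \<le> measure_pmf.prob (binomial_pmf n (1/2)) {k. 2 * k \<le> n}"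
proof -
  have "measure_pmf.prob (binomial_pmf n (1/2)) {k. n \<le> 2 * k}
      = measure_pmf.prob (binomial_pmf n (1/2)) {k. 2 * k \<le> n}"
    by (rule prob_binomial_half_mirror) auto
  moreover have "1 \<le> measure_pmf.prob (binomial_pmf n (1/2)) {k. n \<le> 2 * k}
      + measure_pmf.prob (binomial_pmf n (1/2)) {k. 2 * k \<le> n}"
    by (rule prob_binomial_half_cover) auto
  ultimately show
    "1/2 \<le> measure_pmf.prob (binomial_pmf n (1/2)) {k. n \<le> 2 * k}"
    "1/2 \<le> measure_pmf.prob (binomial_pmf n (1/2)) {k. 2 * k \<le> n}"
    by linarith+
qed

lemma prob_binomial_half_ne_middle:
  assumes "n \<ge> 1"
  shows "1/2 \<le> measure_pmf.prob (binomial_pmf n (1/2)) {k. 2 * k \<noteq> n}"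
proof -
  have "measure_pmf.prob (binomial_pmf n (1/2)) {k. 2 * k = n} \<le> 1/2"
  proof (cases "even n")
    case True
    then have "{..n} \<inter> {k. 2 * k = n} = {n div 2}"
      by auto
    then have "measure_pmf.prob (binomial_pmf n (1/2)) {k. 2 * k = n} \<le> 1 / sqrt (3 * real (n div 2) + 1)"
      using prob_binomial_half_le_card[of n "{k. 2 * k = n}"] by simp
    also have "\<dots> \<le> 1 / 2"
      using True assms by (intro divide_left_mono real_le_rsqrt) auto
    finally show ?thesis .
  next
    case False
    then have "{..n} \<inter> {k. 2 * k = n} = {}"
      by auto
    then show ?thesis
      using prob_binomial_half_le_card[of n "{k. 2 * k = n}"] by simp
  qed
  moreover have "1 \<le> measure_pmf.prob (binomial_pmf n (1/2)) {k. 2 * k \<noteq> n}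
      + measure_pmf.prob (binomial_pmf n (1/2)) {k. 2 * k = n}"
    by (rule prob_binomial_half_cover) auto
  ultimately show ?thesis
    by linarith
qed

lemma card_nat_in_open_interval_le:
  fixes a b :: real
  assumes "finite S" and "\<And>k. k \<in> S \<Longrightarrow> a < real k \<and> real k < b" and "a \<le> b"
  shows "real (card S) \<le> b - a + 1"
proof (cases "S = {}")
  case True
  then show ?thesis
    using assms(3) by simp
next
  case False
  have "card S \<le> card {Min S..Max S}"
    using assms(1) by (intro card_mono) auto
  also have "\<dots> = Suc (Max S) - Min S"
    by simp
  finally have "real (card S) \<le> real (Max S) + 1 - real (Min S)"
    using Min_le[OF assms(1) Max_in[OF assms(1) False]] by linarith
  moreover have "real (Max S) < b" "a < real (Min S)"
    using assms(2)[OF Max_in[OF assms(1) False]] assms(2)[OF Min_in[OF assms(1) False]] by auto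
  ultimately show ?thesis
    by linarith
qed

lemma prob_binomial_half_deviation:
  assumes "n \<ge> 20"
  defines "r \<equiv> sqrt n / 2500"
  shows "1/3 \<le> measure_pmf.prob (binomial_pmf n (1/2)) {k. n / 2 + r \<le> k}"
    and "1/3 \<le> measure_pmf.prob (binomial_pmf n (1/2)) {k. k \<le> n / 2 - r}"
proof -
  define X where "X = {k::nat. n / 2 + r \<le> k}"
  define Y where "Y = {k::nat. k \<le> n / 2 - r}"
  define M where "M = {k::nat. n / 2 - r < k \<and> k < n / 2 + r}"
  have r_nonneg: "0 \<le> r"
    unfolding r_def by simp
  have mirror: "measure_pmf.prob (binomial_pmf n (1/2)) Y = measure_pmf.prob (binomial_pmf n (1/2)) X"
    unfolding X_def Y_def by (rule prob_binomial_half_mirror) auto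
  have "1 \<le> measure_pmf.prob (binomial_pmf n (1/2)) (X \<union> Y) + measure_pmf.prob (binomial_pmf n (1/2)) M"
    unfolding X_def Y_def M_def by (rule prob_binomial_half_cover) auto
  moreover have "measure_pmf.prob (binomial_pmf n (1/2)) (X \<union> Y)
      \<le> measure_pmf.prob (binomial_pmf n (1/2)) X + measure_pmf.prob (binomial_pmf n (1/2)) Y"
    using measure_Un_le[of X "measure_pmf (binomial_pmf n (1/2))" Y] by simp
  moreover have "measure_pmf.prob (binomial_pmf n (1/2)) M \<le> 1/3"
  proof -
    have "real (card ({..n} \<inter> M)) \<le> (n / 2 + r) - (n / 2 - r) + 1"
      using r_nonneg by (intro card_nat_in_open_interval_le) (auto simp: M_def)
    then have card_M: "real (card ({..n} \<inter> M)) \<le> 2 * r + 1"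
      by simp
    have "measure_pmf.prob (binomial_pmf n (1/2)) M
        \<le> card ({..n} \<inter> M) / sqrt (3 * real (n div 2) + 1)"
      by (rule prob_binomial_half_le_card)
    also have "\<dots> \<le> (2 * r + 1) / sqrt (3 * real (n div 2) + 1)"
      using card_M by (intro divide_right_mono) auto
    also have "\<dots> \<le> (2 * r + 1) / (3 * (2 * r + 1))"
    proof (intro divide_left_mono real_le_rsqrt)
      have "(3 * (2 * r + 1))^2 = 9 * (2 * r + 1)^2"
        by (simp add: power2_eq_square algebra_simps)
      also have "\<dots> \<le> 9 * (8 * r^2 + 2)"
        using sum_squares_ge_zero[of "2 * r - 1" 0] by (simp add: power2_eq_square algebra_simps)
      also have "\<dots> = 72 * n / 6250000 + 18"
        unfolding r_def by (simp add: power_divide)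
      also have "\<dots> \<le> 3 * real (n div 2) + 1"
        using assms(1) by linarith
      finally show "(3 * (2 * r + 1))^2 \<le> 3 * real (n div 2) + 1" .
    qed (use r_nonneg in auto)
    also have "\<dots> = 1/3"
      using r_nonneg by simp
    finally show ?thesis .
  qed
  ultimately show
    "1/3 \<le> measure_pmf.prob (binomial_pmf n (1/2)) {k. n / 2 + r \<le> k}"
    "1/3 \<le> measure_pmf.prob (binomial_pmf n (1/2)) {k. k \<le> n / 2 - r}"
    using mirror unfolding X_def Y_def by linarith+
qed

section \<open>Finite distributions and swap regret\<close>

lemma replicate_pmf_map_pmf: "replicate_pmf n (map_pmf f p) = map_pmf (map f) (replicate_pmf n p)"
  by (induction n) (simp_all add: map_pmf_def bind_assoc_pmf bind_return_pmf bind_return_pmf')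

lemma cond_pmf_superset_support:
  assumes "set_pmf p \<subseteq> A"
  shows "cond_pmf p A = p"
proof (rule pmf_eqI)
  fix x
  have ne: "set_pmf p \<inter> A \<noteq> {}"
    using assms set_pmf_not_empty[of p] by blast
  have "measure_pmf.prob p A = 1"
    using assms by (subst measure_pmf.prob_eq_1) (auto simp: AE_measure_pmf_iff)
  then show "pmf (cond_pmf p A) x = pmf p x"
    using assms pmf_cond[OF ne, of x] by (auto simp: set_pmf_iff)
qed

lemma abs_expectation_le:
  fixes f :: "'a \<Rightarrow> real"
  assumes "\<And>x. x \<in> set_pmf M \<Longrightarrow> \<bar>f x\<bar> \<le> B"
  shows "\<bar>measure_pmf.expectation M f\<bar> \<le> B"
proof -
  have int: "integrable M f"
    using assms by (intro measure_pmf.integrable_const_bound[where B = B]) (auto intro: AE_pmfI)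
  have bounds: "- B \<le> f x" "f x \<le> B" if "x \<in> set_pmf M" for x
    using assms[OF that] by (auto simp: abs_le_iff)
  have "measure_pmf.expectation M f \<le> B"
    using bounds by (intro measure_pmf.integral_le_const[OF int] AE_pmfI)
  moreover have "- B \<le> measure_pmf.expectation M f"
    using bounds by (intro measure_pmf.integral_ge_const[OF int] AE_pmfI)
  ultimately show ?thesis
    by linarith
qed

lemma pmf_times_le_expectation:
  fixes f :: "'a \<Rightarrow> real"
  assumes "finite (set_pmf q)" and "\<And>x. x \<in> set_pmf q \<Longrightarrow> 0 \<le> f x"
  shows "pmf q a * f a \<le> measure_pmf.expectation q f"
proof (cases "a \<in> set_pmf q")
  case True
  have "f a * pmf q a \<le> (\<Sum>x\<in>set_pmf q. f x * pmf q x)"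
    using True assms by (intro member_le_sum) auto
  also have "\<dots> = measure_pmf.expectation q f"
    using assms(1) by (rule integral_measure_pmf_real[symmetric]) simp
  finally show ?thesis
    by (simp add: mult.commute)
next
  case False
  then show ?thesis
    using assms(2) by (auto simp: set_pmf_iff intro!: integral_nonneg_AE AE_pmfI)
qed

lemma exists_pmf_ge_inverse_card:
  assumes "finite A" and "set_pmf q \<subseteq> A"
  shows "\<exists>a\<in>A. 1 / card A \<le> pmf q a"
proof (rule ccontr)
  assume "\<not> ?thesis"
  moreover have "A \<noteq> {}"
    using assms(2) set_pmf_not_empty[of q] by blast
  ultimately have "(\<Sum>a\<in>A. pmf q a) < (\<Sum>a\<in>A. 1 / card A)"
    using assms(1) by (intro sum_strict_mono) auto
  also have "\<dots> = 1"
    using assms(1) \<open>A \<noteq> {}\<close> by simp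
  finally show False
    using sum_pmf_eq_1[OF assms] by simp
qed

lemma set_pmf_empirical: "xs \<noteq> [] \<Longrightarrow> set_pmf (empirical xs) = set xs"
  unfolding empirical_def by (auto simp: set_conv_nth lessThan_empty_iff)

lemma integral_empirical:
  "xs \<noteq> [] \<Longrightarrow> measure_pmf.expectation (empirical xs) f = (\<Sum>i<length xs. f (xs ! i)) / length xs"
  unfolding empirical_def by (simp add: integral_pmf_of_set lessThan_empty_iff)

lemma mean_of_affine:
  fixes y :: "'i \<Rightarrow> real"
  assumes "finite I" and "I \<noteq> {}" and "\<And>t. f t = \<alpha> + \<beta> * t"
  shows "(\<Sum>i\<in>I. f (y i)) / card I = f ((\<Sum>i\<in>I. y i) / card I)"
  using assms by (simp add: sum.distrib sum_distrib_left[symmetric] field_simps)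

lemma swap_regret_ge:
  assumes "\<sigma> ` A \<subseteq> A" and "\<And>p y a. (p, y) \<in> set_pmf D \<Longrightarrow> U a y \<in> {0..1}"
  shows "measure_pmf.expectation D (\<lambda>(p, y). measure_pmf.expectation (r p) (\<lambda>a. U (\<sigma> a) y - U a y))
    \<le> swap_regret A U r D"
proof -
  have "measure_pmf.expectation D
      (\<lambda>(p, y). measure_pmf.expectation (r p) (\<lambda>a. U (\<tau> a) y - U a y)) \<le> 1" for \<tau>
  proof -
    have "\<bar>measure_pmf.expectation (r p) (\<lambda>a. U (\<tau> a) y - U a y)\<bar> \<le> 1" if "(p, y) \<in> set_pmf D" for p y
    proof (rule abs_expectation_le)
      fix a
      show "\<bar>U (\<tau> a) y - U a y\<bar> \<le> 1"
        using assms(2)[OF that, of a] assms(2)[OF that, of "\<tau> a"] by (auto simp: abs_le_iff)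
    qed
    then have "\<bar>measure_pmf.expectation D
        (\<lambda>(p, y). measure_pmf.expectation (r p) (\<lambda>a. U (\<tau> a) y - U a y))\<bar> \<le> 1"
      by (intro abs_expectation_le) auto
    then show ?thesis
      by linarith
  qed
  then show ?thesis
    unfolding swap_regret_def using assms(1) by (intro cSUP_upper bdd_aboveI2) auto
qed

section \<open>The hard instance\<close>

definition hard_actions :: "nat set" where
  "hard_actions = {0, 1, 2, 3}"

definition hard_utility :: "nat \<Rightarrow> real \<Rightarrow> real" where
  "hard_utility a y =
     (if a = 0 then 1 - y else if a = 1 then 61/80 - y/2 else if a = 2 then 21/80 + y/2 else y)"

definition hard_gap :: "nat \<Rightarrow> real \<Rightarrow> real" where
  "hard_gap a F = Max ((\<lambda>b. hard_utility b F) ` hard_actions) - hard_utility a F"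

definition coin_point :: "bool \<Rightarrow> real \<times> real" where
  "coin_point b = (1/2, of_bool b)"

definition coin_dist :: "(real \<times> real) pmf" where
  "coin_dist = map_pmf coin_point (bernoulli_pmf (1/2))"

lemma calibrated_coin_dist: "calibrated coin_dist"
proof -
  have supp: "set_pmf coin_dist = {(1/2, 0), (1/2, 1)}"
    by (auto simp: coin_dist_def coin_point_def UNIV_bool)
  then have "cond_pmf coin_dist {z. fst z = 1/2} = coin_dist"
    by (intro cond_pmf_superset_support) auto
  moreover have "measure_pmf.expectation coin_dist snd = 1/2"
    by (simp add: coin_dist_def coin_point_def)
  ultimately show ?thesis
    unfolding calibrated_def using supp by auto
qed

lemma hard_utility_range: "y \<in> {0, 1} \<Longrightarrow> hard_utility a y \<in> {0..1}"
  by (auto simp: hard_utility_def)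

lemma decision_task_hard: "decision_task hard_actions hard_utility"
  unfolding decision_task_def using hard_utility_range by (simp add: hard_actions_def)

lemma hard_gap_ge:
  assumes "b \<in> hard_actions"
  shows "hard_utility b F - hard_utility a F \<le> hard_gap a F"
proof -
  have "hard_utility b F \<le> Max ((\<lambda>b. hard_utility b F) ` hard_actions)"
    using assms by (intro Max_ge) (auto simp: hard_actions_def)
  then show ?thesis
    unfolding hard_gap_def by simp
qed

lemma hard_best_response:
  obtains b where "b \<in> hard_actions"
    and "\<And>a. hard_gap a F = hard_utility b F - hard_utility a F"
proof -
  have "Max ((\<lambda>b. hard_utility b F) ` hard_actions) \<in> (\<lambda>b. hard_utility b F) ` hard_actions"
    by (intro Max_in) (auto simp: hard_actions_def)
  then show ?thesis
    using that unfolding hard_gap_def by auto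
qed

lemma hard_gap_lower_bounds:
  "1/2 \<le> F \<Longrightarrow> 1/80 \<le> hard_gap 0 F"
  "F \<le> 1/2 \<Longrightarrow> 1/80 \<le> hard_gap 3 F"
  "F - 1/2 \<le> hard_gap 1 F"
  "1/2 - F \<le> hard_gap 2 F"
  "F \<le> 9/19 \<Longrightarrow> 1/1520 \<le> hard_gap 1 F"
  "10/19 \<le> F \<Longrightarrow> 1/1520 \<le> hard_gap 2 F"
  using hard_gap_ge[of 1 F 0] hard_gap_ge[of 2 F 3] hard_gap_ge[of 2 F 1]
    hard_gap_ge[of 1 F 2] hard_gap_ge[of 0 F 1] hard_gap_ge[of 3 F 2]
  by (auto simp: hard_actions_def hard_utility_def)

lemma pmf_times_hard_gap_le_swap_regret:
  assumes r: "response_fn hard_actions r" and bs: "bs \<noteq> []" and a: "a \<in> hard_actions"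
  defines "F \<equiv> length (filter id bs) / length bs"
  shows "pmf (r (1/2)) a * hard_gap a F
    \<le> swap_regret hard_actions hard_utility r (empirical (map coin_point bs))"
proof -
  define q where "q = r (1/2)"
  define y where "y i = (of_bool (bs ! i) :: real)" for i
  have q_supp: "set_pmf q \<subseteq> hard_actions"
    using r unfolding response_fn_def q_def by simp
  then have q_fin: "finite (set_pmf q)"
    by (rule finite_subset) (simp add: hard_actions_def)
  obtain b where b: "b \<in> hard_actions" and gap: "\<And>a. hard_gap a F = hard_utility b F - hard_utility a F"
    using hard_best_response by blast
  have F_mean: "F = (\<Sum>i<length bs. y i) / length bs"
    unfolding F_def y_def by (simp add: length_filter_conv_card lessThan_def Int_def conj_commute)
  have mean: "(\<Sum>i<length bs. hard_utility b (y i) - hard_utility a' (y i)) / length bs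
      = hard_utility b F - hard_utility a' F" for a'
  proof -
    have "(\<Sum>i<length bs. (\<lambda>t. hard_utility b t - hard_utility a' t) (y i)) / card {..<length bs}
        = (\<lambda>t. hard_utility b t - hard_utility a' t) ((\<Sum>i<length bs. y i) / card {..<length bs})"
      using bs by (intro mean_of_affine[where \<alpha> = "hard_utility b 0 - hard_utility a' 0"
          and \<beta> = "hard_utility b 1 - hard_utility b 0 - (hard_utility a' 1 - hard_utility a' 0)"])
        (auto simp: hard_utility_def algebra_simps)
    then show ?thesis
      unfolding F_mean by simp
  qed
  have "pmf q a * hard_gap a F \<le> measure_pmf.expectation q (\<lambda>a'. hard_utility b F - hard_utility a' F)"
    unfolding gap using q_supp gap hard_gap_ge[of _ F] by (intro pmf_times_le_expectation q_fin) force
  also have "\<dots> = measure_pmf.expectation q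
      (\<lambda>a'. (\<Sum>i<length bs. hard_utility b (y i) - hard_utility a' (y i)) / length bs)"
    unfolding mean ..
  also have "\<dots> = (\<Sum>i<length bs. measure_pmf.expectation q
      (\<lambda>a'. hard_utility b (y i) - hard_utility a' (y i))) / length bs"
    using q_fin by (simp add: integral_sum integrable_measure_pmf_finite)
  also have "\<dots> = measure_pmf.expectation (empirical (map coin_point bs))
      (\<lambda>(p, y). measure_pmf.expectation (r p) (\<lambda>a. hard_utility ((\<lambda>_. b) a) y - hard_utility a y))"
    using bs by (simp add: integral_empirical coin_point_def y_def q_def)
  also have "\<dots> \<le> swap_regret hard_actions hard_utility r (empirical (map coin_point bs))"
    using b bs by (intro swap_regret_ge) (auto simp: set_pmf_empirical coin_point_def hard_utility_def)
  finally show ?thesis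
    unfolding q_def .
qed

lemma hard_gap_large_on_events:
  fixes T k :: nat
  assumes T: "T \<ge> 1"
  defines "\<delta> \<equiv> 1 / (2500 * sqrt T)" and "F \<equiv> k / T"
  shows "T \<le> 2 * k \<Longrightarrow> \<delta> \<le> hard_gap 0 F"
    and "2 * k \<le> T \<Longrightarrow> \<delta> \<le> hard_gap 3 F"
    and "T \<le> 19 \<Longrightarrow> 2 * k \<noteq> T \<Longrightarrow> \<delta> \<le> hard_gap 1 F"
    and "T \<le> 19 \<Longrightarrow> 2 * k \<noteq> T \<Longrightarrow> \<delta> \<le> hard_gap 2 F"
    and "T / 2 + sqrt T / 2500 \<le> k \<Longrightarrow> \<delta> \<le> hard_gap 1 F"
    and "k \<le> T / 2 - sqrt T / 2500 \<Longrightarrow> \<delta> \<le> hard_gap 2 F"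
proof -
  have T_pos: "0 < real T"
    using T by simp
  have \<delta>_le: "\<delta> \<le> 1/2500"
    unfolding \<delta>_def using T by (simp add: field_simps)
  have \<delta>_eq: "\<delta> = (sqrt T / 2500) / T"
    unfolding \<delta>_def using T_pos by (simp add: field_simps flip: real_sqrt_mult_self[of T])
  have far: "F \<le> 9/19 \<or> 10/19 \<le> F" if "T \<le> 19" "2 * k \<noteq> T"
    unfolding F_def using that T_pos by (simp add: field_simps) linarith
  show "\<delta> \<le> hard_gap 0 F" if "T \<le> 2 * k"
    using that T_pos hard_gap_lower_bounds(1)[of F] \<delta>_le by (simp add: F_def field_simps)
  show "\<delta> \<le> hard_gap 3 F" if "2 * k \<le> T"
    using that T_pos hard_gap_lower_bounds(2)[of F] \<delta>_le by (simp add: F_def field_simps)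
  show "\<delta> \<le> hard_gap 1 F" if "T \<le> 19" "2 * k \<noteq> T"
    using far[OF that] hard_gap_lower_bounds(3,5)[of F] \<delta>_le by linarith
  show "\<delta> \<le> hard_gap 2 F" if "T \<le> 19" "2 * k \<noteq> T"
    using far[OF that] hard_gap_lower_bounds(4,6)[of F] \<delta>_le by linarith
  show "\<delta> \<le> hard_gap 1 F" if "T / 2 + sqrt T / 2500 \<le> k"
  proof -
    have "\<delta> \<le> (k - T / 2) / T"
      unfolding \<delta>_eq using that T_pos by (intro divide_right_mono) auto
    also have "\<dots> = F - 1/2"
      unfolding F_def using T_pos by (simp add: field_simps)
    finally show ?thesis
      using hard_gap_lower_bounds(3)[of F] by linarith
  qed
  show "\<delta> \<le> hard_gap 2 F" if "k \<le> T / 2 - sqrt T / 2500"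
  proof -
    have "\<delta> \<le> (T / 2 - k) / T"
      unfolding \<delta>_eq using that T_pos by (intro divide_right_mono) auto
    also have "\<dots> = 1/2 - F"
      unfolding F_def using T_pos by (simp add: field_simps)
    finally show ?thesis
      using hard_gap_lower_bounds(4)[of F] by linarith
  qed
qed

lemma prob_hard_gap_ge:
  assumes T: "T \<ge> 1" and a: "a \<in> hard_actions"
  shows "1/3 \<le> measure_pmf.prob (binomial_pmf T (1/2)) {k. 1 / (2500 * sqrt T) \<le> hard_gap a (k / T)}"
    (is "_ \<le> measure_pmf.prob ?B ?E")
proof -
  have event_mono: "measure_pmf.prob ?B X \<le> measure_pmf.prob ?B ?E"
    if "\<And>k. k \<in> X \<Longrightarrow> 1 / (2500 * sqrt T) \<le> hard_gap a (k / T)" for X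
    using that by (intro measure_pmf.finite_measure_mono) auto
  note gap_large = hard_gap_large_on_events[OF T]
  consider "a = 0" | "a = 3" | "a \<in> {1, 2}" "T \<le> 19" | "a = 1" "T > 19" | "a = 2" "T > 19"
    using a by (force simp: hard_actions_def)
  then show ?thesis
  proof cases
    case 1
    then show ?thesis
      using event_mono[of "{k. T \<le> 2 * k}"] gap_large(1) prob_binomial_half_ge_half(1)[of T] by force
  next
    case 2
    then show ?thesis
      using event_mono[of "{k. 2 * k \<le> T}"] gap_large(2) prob_binomial_half_ge_half(2)[of T] by force
  next
    case 3
    then show ?thesis
      using event_mono[of "{k. 2 * k \<noteq> T}"] gap_large(3,4) prob_binomial_half_ne_middle[OF T] by force
  next
    case 4
    then show ?thesis
      using event_mono[of "{k. T / 2 + sqrt T / 2500 \<le> k}"] gap_large(5)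
        prob_binomial_half_deviation(1)[of T] by force
  next
    case 5
    then show ?thesis
      using event_mono[of "{k. k \<le> T / 2 - sqrt T / 2500}"] gap_large(6)
        prob_binomial_half_deviation(2)[of T] by force
  qed
qed

lemma swap_regret_ge_of_hard_gap:
  assumes r: "response_fn hard_actions r" and a: "a \<in> hard_actions" "1/4 \<le> pmf (r (1/2)) a"
    and bs: "bs \<noteq> []"
    and gap: "1 / (2500 * sqrt (length bs)) \<le> hard_gap a (length (filter id bs) / length bs)"
  shows "(1/10000) / sqrt (length bs) \<le> swap_regret hard_actions hard_utility r (empirical (map coin_point bs))"
proof -
  define F where "F = length (filter id bs) / length bs"
  have "(1/10000) / sqrt (length bs) \<le> 1/4 * hard_gap a F"
    using gap unfolding F_def by simp
  also have "\<dots> \<le> pmf (r (1/2)) a * hard_gap a F"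
    using a(2) hard_gap_ge[OF a(1), of F a] by (intro mult_right_mono) simp_all
  also have "\<dots> \<le> swap_regret hard_actions hard_utility r (empirical (map coin_point bs))"
    unfolding F_def by (rule pmf_times_hard_gap_le_swap_regret[OF r bs a(1)])
  finally show ?thesis .
qed

lemma prob_swap_regret_coin_ge:
  assumes T: "T \<ge> 1" and r: "response_fn hard_actions r"
  shows "1/3 \<le> measure_pmf.prob (replicate_pmf T coin_dist)
    {xs. (1/10000) / sqrt T \<le> swap_regret hard_actions hard_utility r (empirical xs)}"
proof -
  let ?coins = "replicate_pmf T (bernoulli_pmf (1/2))"
  obtain a where a: "a \<in> hard_actions" "1/4 \<le> pmf (r (1/2)) a"
    using exists_pmf_ge_inverse_card[of hard_actions "r (1/2)"] r
    by (auto simp: response_fn_def hard_actions_def)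
  have "1/3 \<le> measure_pmf.prob (binomial_pmf T (1/2)) {k. 1 / (2500 * sqrt T) \<le> hard_gap a (k / T)}"
    using T a(1) by (rule prob_hard_gap_ge)
  also have "\<dots> = measure_pmf.prob ?coins
      {bs. 1 / (2500 * sqrt T) \<le> hard_gap a (length (filter id bs) / T)}"
    by (simp add: binomial_pmf_altdef vimage_def)
  also have "\<dots> \<le> measure_pmf.prob ?coins
      {bs. (1/10000) / sqrt T \<le> swap_regret hard_actions hard_utility r (empirical (map coin_point bs))}"
  proof (intro measure_pmf.finite_measure_mono_AE AE_pmfI impI)
    fix bs
    assume "bs \<in> set_pmf ?coins"
    then have "length bs = T" "bs \<noteq> []"
      using T by (auto simp: set_replicate_pmf)
    then show "bs \<in> {bs. 1 / (2500 * sqrt T) \<le> hard_gap a (length (filter id bs) / T)} \<Longrightarrow>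
        bs \<in> {bs. (1/10000) / sqrt T \<le> swap_regret hard_actions hard_utility r (empirical (map coin_point bs))}"
      using swap_regret_ge_of_hard_gap[OF r a] by auto
  qed simp
  also have "\<dots> = measure_pmf.prob (replicate_pmf T coin_dist)
      {xs. (1/10000) / sqrt T \<le> swap_regret hard_actions hard_utility r (empirical xs)}"
    by (simp add: coin_dist_def replicate_pmf_map_pmf vimage_def)
  finally show ?thesis .
qed

theorem lemma8p2:
  shows "\<exists>c::real. c > 0 \<and>
    (\<exists>D A U. calibrated D \<and> decision_task A U \<and>
      (\<forall>T::nat. T \<ge> 1 \<longrightarrow>
        (\<forall>r. response_fn A r \<longrightarrow>
           measure_pmf.prob (replicate_pmf T D)
             {xs. swap_regret A U r (empirical xs) \<ge> c / sqrt (real T)} \<ge> 1/3)))"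
  using calibrated_coin_dist decision_task_hard prob_swap_regret_coin_ge
  by (intro exI[of _ "1/10000"] conjI) (simp, blast)

end
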